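(* For any $h$ and any $\mu_{h-1}:\mathcal X\to\mathbb R^{\mathsf d}$, the class $$\mathcal W_h(\mu_{h-1})=\Big\{w=\frac{\langle\mu_{h-1},\theta^{\rm up}\rangle}{\langle\mu_{h-1},\theta^{\rm down}\rangle}:\|w\|_\infty\le C^{\mathbf x}_{h-1}C^{\mathbf a}_{h-1},\ \theta^{\rm up},\theta^{\rm down}\in\mathbb R^{\mathsf d}\Big\}$$ has pseudo-dimension $\mathrm{Pdim}(\mathcal W_h(\mu_{h-1}))\le4(\mathsf d+1)\log(8e)$.
   Context: $C^{\mathbf x}_{h-1},C^{\mathbf a}_{h-1}>0$ are constants. Pseudo-dimension of $\mathcal F\subseteq\mathbb R^{\mathcal X}$: the largest $m$ such that some $x_1,\dots,x_m\in\mathcal X$ are pseudo-shattered, i.e. there exist $c_1,\dots,c_m\in\mathbb R$ such that for every $y\in\{-1,+1\}^m$ some $f\in\mathcal F$ has $\mathrm{sgn}(f(x_i)-c_i)=y_i$ for all $i$. *)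

theory Defs
  imports "HOL-Analysis.Analysis" "HOL-Library.Extended_Nat"
begin

definition pseudo_shatters :: "('x \<Rightarrow> real) set \<Rightarrow> 'x list \<Rightarrow> bool" where
  "pseudo_shatters F xs \<longleftrightarrow>
     (\<exists>c :: nat \<Rightarrow> real. \<forall>y :: nat \<Rightarrow> real. (\<forall>i<length xs. y i \<in> {-1, 1}) \<longrightarrow>
        (\<exists>f\<in>F. \<forall>i<length xs. sgn (f (xs ! i) - c i) = y i))"

definition pdim :: "('x \<Rightarrow> real) set \<Rightarrow> enat" where
  "pdim F = Sup {enat (length xs) | xs. distinct xs \<and> pseudo_shatters F xs}"

definition W_class :: "('x \<Rightarrow> real^'d) \<Rightarrow> real \<Rightarrow> real \<Rightarrow> ('x \<Rightarrow> real) set" where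
  "W_class \<mu> Cx Ca = {w. \<exists>\<theta>up \<theta>down :: real^'d.
       w = (\<lambda>x. (\<mu> x \<bullet> \<theta>up) / (\<mu> x \<bullet> \<theta>down)) \<and> (\<forall>x. \<bar>w x\<bar> \<le> Cx * Ca)}"

end

theory Submission
  imports Defs
begin

text \<open>Whether w x = (mu x \<bullet> a) / (mu x \<bullet> b) lies above a threshold c is decided by the
  signs of the two linear forms (0, mu x) and (mu x, -c mu x) evaluated at the parameter (a, b).
  Pseudo-shattering m points therefore produces 2^m distinct sign vectors of 2m linear forms on
  a space of dimension 2d. If two parameters give opposite signs on a form u and equal signs on
  the remaining forms, a convex combination of them vanishes on u and keeps the signs on the
  remaining forms; so appending u to the list adds at most twice as many sign vectors as the
  hyperplane section of the parameter set carries. By induction on the number n of forms, a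
  subspace of dimension k carries at most a^k b^n sign vectors whenever a (b - 1) \<ge> 2.
  With a = 20 and b = 11/10 this gives m \<le> 12 d.\<close>

definition sign_patterns :: "'a::real_inner set \<Rightarrow> 'a list \<Rightarrow> real list set" where
  "sign_patterns V us = {map (\<lambda>u. sgn (u \<bullet> v)) us | v. v \<in> V}"

lemma finite_sign_patterns: "finite (sign_patterns V us)"
proof (rule finite_subset)
  show "sign_patterns V us \<subseteq> {s. set s \<subseteq> {-1, 0, 1} \<and> length s = length us}"
    unfolding sign_patterns_def by (auto simp: sgn_real_def)
  show "finite {s. set s \<subseteq> {-1::real, 0, 1} \<and> length s = length us}"
    by (rule finite_lists_length_eq) simp
qed

lemma sign_patterns_Nil: "sign_patterns V [] \<subseteq> {[]}"
  unfolding sign_patterns_def by auto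

lemma sign_patterns_Cons_orthogonal:
  assumes "\<forall>v\<in>V. u \<bullet> v = 0"
  shows "sign_patterns V (u # us) = Cons 0 ` sign_patterns V us"
  using assms unfolding sign_patterns_def by force

lemma sgn_convex_combination:
  fixes p q l :: real
  assumes "sgn p = sgn q" "0 < l" "l < 1"
  shows "sgn ((1 - l) * p + l * q) = sgn p"
proof -
  consider "p > 0" "q > 0" | "p < 0" "q < 0" | "p = 0" "q = 0"
    using assms(1) by (auto simp: sgn_real_def split: if_splits)
  then show ?thesis
  proof cases
    case 2
    then have "(1 - l) * p < 0" "l * q < 0"
      using assms by (simp_all add: mult_pos_neg)
    then show ?thesis using 2 by simp
  qed (use assms in \<open>simp_all add: add_pos_pos\<close>)
qed

lemma sign_patterns_Cons_both_signs:
  assumes "convex V"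
    and pos: "1 # t \<in> sign_patterns V (u # us)"
    and neg: "-1 # t \<in> sign_patterns V (u # us)"
  shows "t \<in> sign_patterns (V \<inter> {v. u \<bullet> v = 0}) us"
proof -
  obtain v1 where v1: "v1 \<in> V" "sgn (u \<bullet> v1) = 1" "t = map (\<lambda>w. sgn (w \<bullet> v1)) us"
    using pos unfolding sign_patterns_def by auto
  obtain v2 where v2: "v2 \<in> V" "sgn (u \<bullet> v2) = -1" "t = map (\<lambda>w. sgn (w \<bullet> v2)) us"
    using neg unfolding sign_patterns_def by auto
  define p q where "p = u \<bullet> v1" and "q = u \<bullet> v2"
  have "p > 0" "q < 0"
    using v1(2) v2(2) unfolding p_def q_def by (auto simp: sgn_real_def split: if_splits)
  define l where "l = p / (p - q)"
  have l: "0 < l" "l < 1"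
    using \<open>p > 0\<close> \<open>q < 0\<close> unfolding l_def by (auto simp: field_simps)
  define v where "v = (1 - l) *\<^sub>R v1 + l *\<^sub>R v2"
  have "v \<in> V"
    unfolding v_def using l by (intro convexD \<open>convex V\<close> v1(1) v2(1)) auto
  have inner_v: "w \<bullet> v = (1 - l) * (w \<bullet> v1) + l * (w \<bullet> v2)" for w
    unfolding v_def by (simp add: inner_add_right)
  have "u \<bullet> v = 0"
    using \<open>p > 0\<close> \<open>q < 0\<close> unfolding inner_v l_def p_def [symmetric] q_def [symmetric]
    by (simp add: field_simps)
  moreover have "map (\<lambda>w. sgn (w \<bullet> v)) us = t"
  proof -
    have "sgn (w \<bullet> v1) = sgn (w \<bullet> v2)" if "w \<in> set us" for w
      using that v1(3) v2(3) by simp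
    then have "map (\<lambda>w. sgn (w \<bullet> v)) us = map (\<lambda>w. sgn (w \<bullet> v1)) us"
      unfolding inner_v using sgn_convex_combination[OF _ l] by simp
    then show ?thesis using v1(3) by simp
  qed
  ultimately show ?thesis
    using \<open>v \<in> V\<close> unfolding sign_patterns_def by auto
qed

lemma card_sign_patterns_Cons_le:
  assumes "convex V"
  shows "card (sign_patterns V (u # us))
    \<le> card (sign_patterns V us) + 2 * card (sign_patterns (V \<inter> {v. u \<bullet> v = 0}) us)"
proof -
  define K where "K = V \<inter> {v. u \<bullet> v = 0}"
  define A where "A x = {t. x # t \<in> sign_patterns V (u # us)}" for x :: real
  have A_sub: "A x \<subseteq> sign_patterns V us" for x
    unfolding A_def sign_patterns_def by auto
  have A_fin: "finite (A x)" for x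
    using A_sub finite_sign_patterns by (rule finite_subset)
  have A0: "A 0 \<subseteq> sign_patterns K us"
  proof
    fix t assume "t \<in> A 0"
    then obtain v where "v \<in> V" "u \<bullet> v = 0" "t = map (\<lambda>w. sgn (w \<bullet> v)) us"
      unfolding A_def sign_patterns_def by (auto simp: sgn_0_0)
    then show "t \<in> sign_patterns K us"
      unfolding K_def sign_patterns_def by blast
  qed
  have A1_A2: "A 1 \<inter> A (-1) \<subseteq> sign_patterns K us"
    unfolding A_def K_def using sign_patterns_Cons_both_signs[OF assms] by blast
  have "sign_patterns V (u # us) \<subseteq> Cons 0 ` A 0 \<union> Cons 1 ` A 1 \<union> Cons (-1) ` A (-1)"
  proof
    fix s assume s: "s \<in> sign_patterns V (u # us)"
    then obtain x t where "s = x # t" "x \<in> {-1, 0, 1}"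
      unfolding sign_patterns_def by (auto simp: sgn_real_def)
    then show "s \<in> Cons 0 ` A 0 \<union> Cons 1 ` A 1 \<union> Cons (-1) ` A (-1)"
      using s unfolding A_def by auto
  qed
  then have "card (sign_patterns V (u # us))
      \<le> card (Cons 0 ` A 0 \<union> Cons 1 ` A 1 \<union> Cons (-1) ` A (-1))"
    by (intro card_mono) (simp_all add: A_fin)
  also have "\<dots> \<le> card (A 0) + card (A 1) + card (A (-1))"
    by (intro card_Un_le [THEN order_trans] add_mono card_image_le A_fin order_refl)
  finally have "card (sign_patterns V (u # us)) \<le> card (A 0) + card (A 1) + card (A (-1))" .
  moreover have "card (A 1) + card (A (-1)) = card (A 1 \<union> A (-1)) + card (A 1 \<inter> A (-1))"
    using card_Un_Int A_fin by blast
  moreover have "card (A 1 \<union> A (-1)) \<le> card (sign_patterns V us)"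
    using A_sub by (intro card_mono finite_sign_patterns) auto
  moreover have "card (A 0) \<le> card (sign_patterns K us)"
    using A0 by (intro card_mono finite_sign_patterns)
  moreover have "card (A 1 \<inter> A (-1)) \<le> card (sign_patterns K us)"
    using A1_A2 by (intro card_mono finite_sign_patterns)
  ultimately show ?thesis
    unfolding K_def by linarith
qed

lemma card_sign_patterns_le:
  fixes V :: "'a::euclidean_space set" and a b :: real
  assumes "subspace V" and "1 \<le> a" and "2 \<le> a * (b - 1)"
  shows "card (sign_patterns V us) \<le> a ^ dim V * b ^ length us"
  using \<open>subspace V\<close>
proof (induction us arbitrary: V)
  case Nil
  have "card (sign_patterns V []) \<le> card {[] :: real list}"
    using sign_patterns_Nil by (rule card_mono [rotated]) simp
  then have "card (sign_patterns V []) \<le> (1::real)"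
    by simp
  also have "1 \<le> a ^ dim V"
    using \<open>1 \<le> a\<close> by (rule one_le_power)
  finally show ?case
    by simp
next
  case (Cons u us)
  have "1 \<le> b"
    using assms(2,3) by (smt (verit) mult_nonneg_nonpos)
  show ?case
  proof (cases "\<forall>v\<in>V. u \<bullet> v = 0")
    case True
    then have "real (card (sign_patterns V (u # us))) \<le> card (sign_patterns V us)"
      by (simp add: sign_patterns_Cons_orthogonal card_image_le finite_sign_patterns)
    also have "\<dots> \<le> a ^ dim V * b ^ length us"
      using Cons.IH [OF Cons.prems] .
    also have "\<dots> \<le> a ^ dim V * b ^ length (u # us)"
      using \<open>1 \<le> a\<close> \<open>1 \<le> b\<close> by (intro mult_left_mono power_increasing) auto
    finally show ?thesis .
  next
    case False
    define K where "K = V \<inter> {v. u \<bullet> v = 0}"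
    have "subspace K"
      unfolding K_def using Cons.prems by (intro subspace_inter subspace_hyperplane)
    have "K \<subset> V"
      using False unfolding K_def by auto
    then have "dim K < dim V"
      using \<open>subspace K\<close> Cons.prems by (metis dim_psubset span_eq_iff)
    define k where "k = dim V - 1"
    have k: "dim V = Suc k" "dim K \<le> k"
      using \<open>dim K < dim V\<close> unfolding k_def by simp_all
    have "card (sign_patterns K us) \<le> a ^ dim K * b ^ length us"
      using Cons.IH [OF \<open>subspace K\<close>] .
    also have "\<dots> \<le> a ^ k * b ^ length us"
      using \<open>1 \<le> a\<close> \<open>1 \<le> b\<close> k(2) by (intro mult_right_mono power_increasing) auto
    finally have IH_K: "card (sign_patterns K us) \<le> a ^ k * b ^ length us" .
    have "card (sign_patterns V (u # us))
        \<le> card (sign_patterns V us) + 2 * card (sign_patterns K us)"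
      unfolding K_def using card_sign_patterns_Cons_le [OF subspace_imp_convex [OF Cons.prems]] .
    then have "card (sign_patterns V (u # us))
        \<le> a ^ Suc k * b ^ length us + 2 * (a ^ k * b ^ length us)"
      using Cons.IH [OF Cons.prems] IH_K unfolding k(1) by linarith
    also have "\<dots> = a ^ k * b ^ length us * (a + 2)"
      by (simp add: algebra_simps)
    also have "\<dots> \<le> a ^ k * b ^ length us * (a * b)"
      using \<open>1 \<le> a\<close> \<open>1 \<le> b\<close> assms(3) by (intro mult_left_mono) (auto simp: algebra_simps)
    also have "\<dots> = a ^ dim V * b ^ length (u # us)"
      using k(1) by (simp add: algebra_simps)
    finally show ?thesis .
  qed
qed

lemma sgn_divide_diff:
  fixes p q c :: real
  shows "sgn (p / q - c) = (if q = 0 then sgn (- c) else sgn (p - c * q) * sgn q)"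
proof (cases "q = 0")
  case False
  then have "p / q - c = (p - c * q) / q"
    by (simp add: field_simps)
  then have "sgn (p / q - c) = sgn (p - c * q) / sgn q"
    by simp
  then show ?thesis
    using False by (cases "q > 0") auto
qed simp

lemma pseudo_shatters_ratios_sign_patterns:
  fixes \<mu> :: "'x \<Rightarrow> 'a::real_inner" and xs :: "'x list"
  assumes ratios: "\<forall>f\<in>F. \<exists>a b. f = (\<lambda>x. (\<mu> x \<bullet> a) / (\<mu> x \<bullet> b))"
    and "pseudo_shatters F xs"
  shows "\<exists>us :: ('a \<times> 'a) list. length us = 2 * length xs
           \<and> 2 ^ length xs \<le> card (sign_patterns UNIV us)"
proof -
  define m where "m = length xs"
  obtain c where c: "\<And>y. \<forall>i<m. y i \<in> {-1, 1} \<Longrightarrow>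
      \<exists>f\<in>F. \<forall>i<m. sgn (f (xs ! i) - c i) = y i"
    using \<open>pseudo_shatters F xs\<close> unfolding pseudo_shatters_def m_def by blast
  define us :: "('a \<times> 'a) list" where
    "us = map (\<lambda>i. (0, \<mu> (xs ! i))) [0..<m]
        @ map (\<lambda>i. (\<mu> (xs ! i), - c i *\<^sub>R \<mu> (xs ! i))) [0..<m]"
  define decode :: "real list \<Rightarrow> real list" where
    "decode \<sigma> = map (\<lambda>i. if \<sigma> ! i = 0 then sgn (- c i) else \<sigma> ! (m + i) * \<sigma> ! i) [0..<m]"
    for \<sigma>
  have "{ys. set ys \<subseteq> {-1, 1} \<and> length ys = m} \<subseteq> decode ` sign_patterns UNIV us"
  proof
    fix ys :: "real list"
    assume "ys \<in> {ys. set ys \<subseteq> {-1, 1} \<and> length ys = m}"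
    then have ys: "set ys \<subseteq> {-1, 1}" "length ys = m"
      by auto
    then obtain f where "f \<in> F" and f: "\<forall>i<m. sgn (f (xs ! i) - c i) = ys ! i"
      using c [of "(!) ys"] nth_mem by blast
    then obtain a b where ab: "f = (\<lambda>x. (\<mu> x \<bullet> a) / (\<mu> x \<bullet> b))"
      using ratios by blast
    define \<sigma> where "\<sigma> = map (\<lambda>u. sgn (u \<bullet> (a, b))) us"
    have "decode \<sigma> = ys"
    proof (rule nth_equalityI)
      fix i assume "i < length (decode \<sigma>)"
      then have "i < m"
        unfolding decode_def by simp
      then have "\<sigma> ! i = sgn (\<mu> (xs ! i) \<bullet> b)"
        and "\<sigma> ! (m + i) = sgn (\<mu> (xs ! i) \<bullet> a - c i * (\<mu> (xs ! i) \<bullet> b))"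
        unfolding \<sigma>_def us_def by (simp_all add: nth_append inner_commute)
      then have "decode \<sigma> ! i = sgn (f (xs ! i) - c i)"
        using \<open>i < m\<close> unfolding decode_def ab
        by (simp add: sgn_divide_diff sgn_0_0 mult.commute)
      then show "decode \<sigma> ! i = ys ! i"
        using f \<open>i < m\<close> by simp
    qed (simp add: decode_def ys)
    moreover have "\<sigma> \<in> sign_patterns UNIV us"
      unfolding \<sigma>_def sign_patterns_def by auto
    ultimately show "ys \<in> decode ` sign_patterns UNIV us"
      by blast
  qed
  then have "card {ys. set ys \<subseteq> {-1::real, 1} \<and> length ys = m}
      \<le> card (sign_patterns UNIV us)"
    by (meson card_image_le card_mono finite_imageI finite_sign_patterns order_trans)
  moreover have "card {ys. set ys \<subseteq> {-1::real, 1} \<and> length ys = m} = 2 ^ m"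
    by (simp add: card_lists_length_eq numeral_2_eq_2)
  moreover have "length us = 2 * m"
    unfolding us_def by simp
  ultimately show ?thesis
    unfolding m_def by metis
qed

lemma two_power_bound_imp_le:
  fixes m d :: nat
  assumes "(2::real) ^ m \<le> 400 ^ d * (121 / 100) ^ m"
  shows "m \<le> 12 * d"
proof (rule ccontr)
  assume "\<not> m \<le> 12 * d"
  have "(400::real) ^ d \<le> ((200 / 121) ^ 12) ^ d"
    by (intro power_mono) (simp_all add: power_divide)
  also have "\<dots> = (200 / 121) ^ (12 * d)"
    by (simp add: power_mult)
  also have "\<dots> < (200 / 121) ^ m"
    using \<open>\<not> m \<le> 12 * d\<close> by (intro power_strict_increasing) simp_all
  finally have "400 ^ d * (121 / 100) ^ m < (200 / 121) ^ m * (121 / 100 :: real) ^ m"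
    by simp
  also have "\<dots> = 2 ^ m"
    by (simp flip: power_mult_distrib)
  finally show False
    using assms by simp
qed

lemma pseudo_shatters_ratios_length_le:
  fixes \<mu> :: "'x \<Rightarrow> 'a::euclidean_space" and xs :: "'x list"
  assumes "\<forall>f\<in>F. \<exists>a b. f = (\<lambda>x. (\<mu> x \<bullet> a) / (\<mu> x \<bullet> b))"
    and "pseudo_shatters F xs"
  shows "length xs \<le> 12 * DIM('a)"
proof -
  obtain us :: "('a \<times> 'a) list"
    where "length us = 2 * length xs" and "2 ^ length xs \<le> card (sign_patterns UNIV us)"
    using pseudo_shatters_ratios_sign_patterns [OF assms] by blast
  then have "(2::real) ^ length xs \<le> card (sign_patterns UNIV us)"
    by (metis of_nat_le_iff of_nat_numeral of_nat_power)
  also have "\<dots> \<le> 20 ^ dim (UNIV :: ('a \<times> 'a) set) * (11 / 10) ^ length us"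
    by (rule card_sign_patterns_le) simp_all
  also have "\<dots> = 400 ^ DIM('a) * (121 / 100) ^ length xs"
    unfolding \<open>length us = 2 * length xs\<close> dim_UNIV DIM_prod mult_2 [symmetric]
    by (simp add: power_mult power2_eq_square)
  finally show ?thesis
    by (rule two_power_bound_imp_le)
qed

lemma ln_8_exp_1_ge_3: "3 \<le> ln (8 * exp 1 :: real)"
proof -
  have "exp 2 = exp 1 * (exp 1 :: real)"
    by (simp flip: exp_add)
  also have "\<dots> \<le> 272 / 100 * (272 / 100)"
    using e_less_272 by (intro mult_mono) simp_all
  finally have "ln (exp 2) \<le> ln (8::real)"
    by (subst ln_le_cancel_iff) simp_all
  then show ?thesis
    by (simp add: ln_mult)
qed

theorem lemma14:
  fixes \<mu> :: "'x \<Rightarrow> real^'d" and Cx Ca :: real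
  assumes "Cx > 0" and "Ca > 0"
  shows "pdim (W_class \<mu> Cx Ca) \<le> enat (nat \<lfloor>4 * (real CARD('d) + 1) * ln (8 * exp 1)\<rfloor>)"
  unfolding pdim_def
proof (rule Sup_least, clarify)
  fix xs :: "'x list"
  assume "distinct xs" and shatters: "pseudo_shatters (W_class \<mu> Cx Ca) xs"
  have "\<forall>f\<in>W_class \<mu> Cx Ca. \<exists>a b. f = (\<lambda>x. (\<mu> x \<bullet> a) / (\<mu> x \<bullet> b))"
    unfolding W_class_def by blast
  from pseudo_shatters_ratios_length_le [OF this shatters]
  have "length xs \<le> 12 * CARD('d)"
    by simp
  then have "real (length xs) \<le> 4 * (real CARD('d) + 1) * 3"
    by simp
  also have "\<dots> \<le> 4 * (real CARD('d) + 1) * ln (8 * exp 1)"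
    using ln_8_exp_1_ge_3 by (intro mult_left_mono) simp_all
  finally show "enat (length xs) \<le> enat (nat \<lfloor>4 * (real CARD('d) + 1) * ln (8 * exp 1)\<rfloor>)"
    by (simp add: le_nat_floor)
qed

end
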